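(* Let $\{v_k(t)\}_{k\ge 0}$ be a monic polynomial sequence ($\deg v_k=k$) of complex polynomials. Let $(g_k)_{k\ge0}$ be complex numbers with $g_0=0$ and $g_k\neq 0$ for $k\ge 1$, and let $(h_k)_{k\ge 0}$ be complex numbers with $h_k\neq h_j$ whenever $k\neq j$. Let $\gamma$ and $\phi$ be the linear operators on the space of complex polynomials defined by $\gamma v_k=g_k v_{k-1}$ for $k\ge1$, $\gamma v_0=0$, and $\phi v_k=h_k v_k$ for $k\ge 0$. Then the monic polynomial sequence $\{u_n(t)\}_{n\ge 0}$ ($\deg u_n=n$) satisfying $$\gamma u_n(t)+\phi u_n(t)=h_n u_n(t),\qquad n\ge 0,$$ is given by $u_n(t)=\sum_{k=0}^n c_{n,k}v_k(t)$, where $c_{n,n}=1$ for $n\ge0$ and $$c_{n,k}=\prod_{j=k}^{n-1}\frac{g_{j+1}}{h_n-h_j},\qquad 0\le k\le n-1.$$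
   Context: A polynomial sequence is a sequence of polynomials $p_0,p_1,\dots$ with $\deg p_n=n$; it is monic if each $p_n$ is monic. Every polynomial sequence is a basis of the space of polynomials. *)

theory Defs
  imports "HOL-Computational_Algebra.Polynomial"
begin

definition monic_poly_seq :: "(nat \<Rightarrow> 'a::comm_ring_1 poly) \<Rightarrow> bool" where
  "monic_poly_seq p \<longleftrightarrow> (\<forall>n. degree (p n) = n \<and> lead_coeff (p n) = 1)"

definition poly_linear_op :: "(complex poly \<Rightarrow> complex poly) \<Rightarrow> bool" where
  "poly_linear_op T \<longleftrightarrow> (\<forall>p q. T (p + q) = T p + T q) \<and> (\<forall>a p. T (smult a p) = smult a (T p))"

definition conn_coeff :: "(nat \<Rightarrow> complex) \<Rightarrow> (nat \<Rightarrow> complex) \<Rightarrow> nat \<Rightarrow> nat \<Rightarrow> complex" where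
  "conn_coeff g h n k = (if k = n then 1 else (\<Prod>j\<in>{k..<n}. g (j + 1) / (h n - h j)))"

end

theory Submission
  imports Defs
begin

(* Expanding u = sum_k c_k v_k in the basis v, gamma shifts coefficients down by one index and
   phi acts diagonally, so the eigen-equation gamma u + phi u = h_n u is equivalent to
   c_k (h_n - h_k) = g_(k+1) c_(k+1) for k < n. As the h_k are distinct, this recursion together
   with c_n = 1 determines the c_k, and the product formula solves it. *)

lemma smult_sum_right: "smult c (\<Sum>k\<in>A. f k) = (\<Sum>k\<in>A. smult c (f k))"
  by (induction A rule: infinite_finite_induct) (simp_all add: smult_add_right)

lemma monic_poly_seq_degree: "monic_poly_seq v \<Longrightarrow> degree (v n) = n"
  unfolding monic_poly_seq_def by blast

lemma monic_poly_seq_coeff_top: "monic_poly_seq v \<Longrightarrow> coeff (v n) n = 1"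
  unfolding monic_poly_seq_def by metis

lemma degree_sum_monic_poly_seq_le:
  assumes "monic_poly_seq v"
  shows "degree (\<Sum>k\<le>n. smult (a k) (v k)) \<le> n"
  by (rule degree_sum_le)
    (auto intro: order.trans[OF degree_smult_le] simp: monic_poly_seq_degree[OF assms])

lemma coeff_sum_monic_poly_seq_top:
  assumes "monic_poly_seq v"
  shows "coeff (\<Sum>k\<le>n. smult (a k) (v k)) n = a n"
proof (cases n)
  case 0
  then show ?thesis by (simp add: monic_poly_seq_coeff_top[OF assms])
next
  case (Suc m)
  have "coeff (\<Sum>k\<le>m. smult (a k) (v k)) n = 0"
    using degree_sum_monic_poly_seq_le[OF assms, where n=m and a=a] Suc by (simp add: coeff_eq_0)
  then show ?thesis
    using Suc by (simp add: coeff_sum monic_poly_seq_coeff_top[OF assms])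
qed

lemma degree_sum_monic_poly_seq:
  assumes "monic_poly_seq v" and "a n \<noteq> 0"
  shows "degree (\<Sum>k\<le>n. smult (a k) (v k)) = n"
  using assms degree_sum_monic_poly_seq_le[OF assms(1)] coeff_sum_monic_poly_seq_top[OF assms(1)]
  by (metis le_antisym le_degree)

lemma sum_monic_poly_seq_eq_0D:
  assumes "monic_poly_seq v" and "(\<Sum>k\<le>n. smult (a k) (v k)) = 0" and "k \<le> n"
  shows "a k = 0"
  using assms(2,3)
proof (induction n)
  case 0
  then show ?case using coeff_sum_monic_poly_seq_top[OF assms(1), where n=0 and a=a] by simp
next
  case (Suc n)
  have top: "a (Suc n) = 0"
    using coeff_sum_monic_poly_seq_top[OF assms(1), where n="Suc n" and a=a] Suc.prems(1)
    by (metis coeff_0)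
  with Suc.prems(1) have "(\<Sum>k\<le>n. smult (a k) (v k)) = 0" by simp
  with Suc top show ?case by (cases "k = Suc n") auto
qed

lemma sum_monic_poly_seq_eq_iff:
  assumes "monic_poly_seq v"
  shows "(\<Sum>k\<le>n. smult (a k) (v k)) = (\<Sum>k\<le>n. smult (b k) (v k)) \<longleftrightarrow> (\<forall>k\<le>n. a k = b k)"
proof
  assume "(\<Sum>k\<le>n. smult (a k) (v k)) = (\<Sum>k\<le>n. smult (b k) (v k))"
  then have "(\<Sum>k\<le>n. smult (a k - b k) (v k)) = 0"
    by (simp add: smult_diff_left sum_subtractf)
  then show "\<forall>k\<le>n. a k = b k"
    using sum_monic_poly_seq_eq_0D[OF assms] by fastforce
qed simp

lemma monic_poly_seq_spans:
  assumes "monic_poly_seq v" and "degree p \<le> n"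
  shows "\<exists>a. p = (\<Sum>k\<le>n. smult (a k) (v k))"
  using assms(2)
proof (induction n arbitrary: p)
  case 0
  have "v 0 = 1"
    using monic_poly_seq_degree[OF assms(1)] monic_poly_seq_coeff_top[OF assms(1)]
    by (metis degree_0_id one_pCons)
  moreover have "p = [:coeff p 0:]"
    using 0 by (simp add: degree_0_id)
  ultimately have "p = (\<Sum>k\<le>0. smult ((\<lambda>_. coeff p 0) k) (v k))"
    by simp
  then show ?case by (rule exI[where x="\<lambda>_. coeff p 0"])
next
  case (Suc n)
  define q where "q = p - smult (coeff p (Suc n)) (v (Suc n))"
  have "degree q \<le> Suc n"
    unfolding q_def using Suc.prems monic_poly_seq_degree[OF assms(1)]
    by (intro degree_diff_le order.trans[OF degree_smult_le]) auto
  moreover have "coeff q (Suc n) = 0"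
    unfolding q_def by (simp add: monic_poly_seq_coeff_top[OF assms(1)])
  ultimately have "degree q \<le> n"
    by (metis le_SucE leading_coeff_0_iff degree_0 le0)
  then obtain a where a: "q = (\<Sum>k\<le>n. smult (a k) (v k))"
    using Suc.IH by blast
  define b where "b = a(Suc n := coeff p (Suc n))"
  have "(\<Sum>k\<le>n. smult (b k) (v k)) = q"
    unfolding a b_def by (intro sum.cong) auto
  then have "p = (\<Sum>k\<le>Suc n. smult (b k) (v k))"
    unfolding q_def by (simp add: b_def)
  then show ?case by blast
qed

lemma poly_linear_op_add: "poly_linear_op T \<Longrightarrow> T (p + q) = T p + T q"
  unfolding poly_linear_op_def by blast

lemma poly_linear_op_smult: "poly_linear_op T \<Longrightarrow> T (smult a p) = smult a (T p)"
  unfolding poly_linear_op_def by blast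

lemma conn_coeff_Suc:
  assumes "k < n"
  shows "conn_coeff g h n k = g (Suc k) / (h n - h k) * conn_coeff g h n (Suc k)"
  using assms by (cases "Suc k = n") (auto simp: conn_coeff_def prod.atLeast_Suc_lessThan)

lemma conn_coeff_iff:
  assumes h_distinct: "\<And>k. k < n \<Longrightarrow> h k \<noteq> h n"
  shows "(a n = 1 \<and> (\<forall>k<n. a k * (h n - h k) = g (Suc k) * a (Suc k)))
           \<longleftrightarrow> (\<forall>k\<le>n. a k = conn_coeff g h n k)"
proof
  assume rec: "a n = 1 \<and> (\<forall>k<n. a k * (h n - h k) = g (Suc k) * a (Suc k))"
  show "\<forall>k\<le>n. a k = conn_coeff g h n k"
  proof (intro allI impI)
    fix k assume "k \<le> n"
    then show "a k = conn_coeff g h n k"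
    proof (induction k rule: inc_induct)
      case base
      then show ?case using rec by (simp add: conn_coeff_def)
    next
      case (step k)
      with rec h_distinct[of k] show ?case
        by (simp add: conn_coeff_Suc field_simps)
    qed
  qed
next
  assume a: "\<forall>k\<le>n. a k = conn_coeff g h n k"
  have "a k * (h n - h k) = g (Suc k) * a (Suc k)" if "k < n" for k
  proof -
    have "h n - h k \<noteq> 0"
      using h_distinct[OF that] by simp
    with a that show ?thesis
      by (simp add: conn_coeff_Suc[OF that])
  qed
  with a show "a n = 1 \<and> (\<forall>k<n. a k * (h n - h k) = g (Suc k) * a (Suc k))"
    by (simp add: conn_coeff_def)
qed

locale lowering_diagonal_operators =
  fixes v :: "nat \<Rightarrow> complex poly"
    and g h :: "nat \<Rightarrow> complex"
    and \<gamma> \<phi> :: "complex poly \<Rightarrow> complex poly"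
  assumes v_monic: "monic_poly_seq v"
    and \<gamma>_lin: "poly_linear_op \<gamma>"
    and \<phi>_lin: "poly_linear_op \<phi>"
    and \<gamma>_v: "\<And>k. k \<ge> 1 \<Longrightarrow> \<gamma> (v k) = smult (g k) (v (k - 1))"
    and \<gamma>_v0: "\<gamma> (v 0) = 0"
    and \<phi>_v: "\<And>k. \<phi> (v k) = smult (h k) (v k)"
begin

lemma \<gamma>_sum: "\<gamma> (\<Sum>k\<le>n. smult (a k) (v k)) = (\<Sum>k<n. smult (g (Suc k) * a (Suc k)) (v k))"
proof (induction n)
  case 0
  then show ?case by (simp add: poly_linear_op_smult[OF \<gamma>_lin] \<gamma>_v0)
next
  case (Suc n)
  then show ?case
    by (simp add: poly_linear_op_add[OF \<gamma>_lin] poly_linear_op_smult[OF \<gamma>_lin] \<gamma>_v mult.commute)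
qed

lemma \<phi>_sum: "\<phi> (\<Sum>k\<le>n. smult (a k) (v k)) = (\<Sum>k\<le>n. smult (h k * a k) (v k))"
  by (induction n) (simp_all add: poly_linear_op_add[OF \<phi>_lin] poly_linear_op_smult[OF \<phi>_lin] \<phi>_v mult.commute)

lemma eigen_equation_iff:
  fixes a :: "nat \<Rightarrow> complex" and n :: nat
  defines "u \<equiv> \<Sum>k\<le>n. smult (a k) (v k)"
  shows "\<gamma> u + \<phi> u = smult (h n) u \<longleftrightarrow> (\<forall>k<n. a k * (h n - h k) = g (Suc k) * a (Suc k))"
proof -
  define b where "b k = (if k < n then g (Suc k) * a (Suc k) else 0) + h k * a k" for k
  have "\<gamma> u = (\<Sum>k\<le>n. smult (if k < n then g (Suc k) * a (Suc k) else 0) (v k))"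
    unfolding u_def \<gamma>_sum by (subst lessThan_Suc_atMost[symmetric]) (auto intro!: sum.cong)
  then have "\<gamma> u + \<phi> u = (\<Sum>k\<le>n. smult (b k) (v k))"
    unfolding u_def \<phi>_sum b_def by (simp add: smult_add_left sum.distrib)
  moreover have "smult (h n) u = (\<Sum>k\<le>n. smult (h n * a k) (v k))"
    unfolding u_def by (simp add: smult_sum_right)
  moreover have "b k = h n * a k \<longleftrightarrow> a k * (h n - h k) = g (Suc k) * a (Suc k)" if "k < n" for k
    using that unfolding b_def by (auto simp: algebra_simps)
  moreover have "b n = h n * a n"
    unfolding b_def by simp
  ultimately show ?thesis
    by (auto simp: sum_monic_poly_seq_eq_iff[OF v_monic] le_less)
qed

lemma normalized_eigen_equation_iff:
  assumes h_distinct: "\<And>k. k < n \<Longrightarrow> h k \<noteq> h n"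
    and u: "u = (\<Sum>k\<le>n. smult (a k) (v k))"
  shows "(a n = 1 \<and> \<gamma> u + \<phi> u = smult (h n) u) \<longleftrightarrow> u = (\<Sum>k\<le>n. smult (conn_coeff g h n k) (v k))"
proof -
  have "(a n = 1 \<and> \<gamma> u + \<phi> u = smult (h n) u) \<longleftrightarrow> (\<forall>k\<le>n. a k = conn_coeff g h n k)"
    unfolding u eigen_equation_iff by (rule conn_coeff_iff[of n h, OF h_distinct])
  also have "\<dots> \<longleftrightarrow> u = (\<Sum>k\<le>n. smult (conn_coeff g h n k) (v k))"
    unfolding u by (rule sum_monic_poly_seq_eq_iff[OF v_monic, symmetric])
  finally show ?thesis .
qed

end

theorem theorem1:
  fixes v :: "nat \<Rightarrow> complex poly"
    and g h :: "nat \<Rightarrow> complex"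
    and \<gamma> \<phi> :: "complex poly \<Rightarrow> complex poly"
  assumes v_monic: "monic_poly_seq v"
    and g0: "g 0 = 0"
    and g_nz: "\<And>k. k \<ge> 1 \<Longrightarrow> g k \<noteq> 0"
    and h_inj: "\<And>k j. k \<noteq> j \<Longrightarrow> h k \<noteq> h j"
    and \<gamma>_lin: "poly_linear_op \<gamma>"
    and \<phi>_lin: "poly_linear_op \<phi>"
    and \<gamma>_v: "\<And>k. k \<ge> 1 \<Longrightarrow> \<gamma> (v k) = smult (g k) (v (k - 1))"
    and \<gamma>_v0: "\<gamma> (v 0) = 0"
    and \<phi>_v: "\<And>k. \<phi> (v k) = smult (h k) (v k)"
  shows "\<forall>n (u :: complex poly).
           (degree u = n \<and> lead_coeff u = 1 \<and> \<gamma> u + \<phi> u = smult (h n) u)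
           \<longleftrightarrow> u = (\<Sum>k\<le>n. smult (conn_coeff g h n k) (v k))"
proof (intro allI)
  fix n and u :: "complex poly"
  interpret lowering_diagonal_operators v g h \<gamma> \<phi>
    using assms by unfold_locales
  let ?c = "conn_coeff g h n"
  have h_distinct: "h k \<noteq> h n" if "k < n" for k
    using h_inj[of k n] that by simp
  show "(degree u = n \<and> lead_coeff u = 1 \<and> \<gamma> u + \<phi> u = smult (h n) u)
          \<longleftrightarrow> u = (\<Sum>k\<le>n. smult (?c k) (v k))"
  proof
    assume u: "degree u = n \<and> lead_coeff u = 1 \<and> \<gamma> u + \<phi> u = smult (h n) u"
    then obtain a where a: "u = (\<Sum>k\<le>n. smult (a k) (v k))"
      using monic_poly_seq_spans[OF v_monic, of u n] by auto
    have "a n = coeff u n"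
      unfolding a by (rule coeff_sum_monic_poly_seq_top[OF v_monic, symmetric])
    with u have "a n = 1" by auto
    with u normalized_eigen_equation_iff[OF h_distinct a] show "u = (\<Sum>k\<le>n. smult (?c k) (v k))" by blast
  next
    assume u: "u = (\<Sum>k\<le>n. smult (?c k) (v k))"
    have top: "?c n = 1" by (simp add: conn_coeff_def)
    have "degree u = n"
      unfolding u by (rule degree_sum_monic_poly_seq[OF v_monic]) (simp add: top)
    moreover have "coeff u n = 1"
      unfolding u by (simp add: coeff_sum_monic_poly_seq_top[OF v_monic] top)
    moreover have "\<gamma> u + \<phi> u = smult (h n) u"
      using normalized_eigen_equation_iff[OF h_distinct u] u top by blast
    ultimately show "degree u = n \<and> lead_coeff u = 1 \<and> \<gamma> u + \<phi> u = smult (h n) u"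
      by simp
  qed
qed

end
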